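(* Let $\mathfrak g$ be of type $A_n$ with $n\ge 2$ and let $r=\frac{n+1}{\gcd(n+1,2)}$. Then the cardinality of $\Psi_{\min}$ equals the number of minimal $n$-sequences of type $r$.
   Context: For $\mathfrak g$ of type $A_n$ with fundamental weights $\lambda_1,\dots,\lambda_n$ (labelled along the Dynkin diagram $1-2-\cdots-n$), root lattice $Q$ and dominant weights $\Lambda^+=\bigoplus_i\mathbb N\lambda_i$, let $\Psi=\{\lambda\in\Lambda^+: 2\lambda\in Q\}$ and $\Psi_{\min}=\{\lambda\in\Psi\setminus\{0\}:\lambda\ne\mu_1+\mu_2\text{ for all }\mu_1,\mu_2\in\Psi\setminus\{0\}\}$. An $n$-sequence is an $n$-tuple $\mathbf t=(t_1,\dots,t_n)$ of nonnegative integers; set $|\mathbf t|=t_1+2t_2+\cdots+nt_n$. For $k\in\mathbb Z_{>0}$, $\mathbf t$ is of type $k$ if $k\mid|\mathbf t|$, and an $n$-sequence of type $k$ is minimal if $\mathbf t\neq(0,\dots,0)$ and $\mathbf t$ is not the (componentwise) sum of two nonzero $n$-sequences of type $k$. *)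

theory Defs
  imports Main
begin

text \<open>Weights of type A_n are written in the basis of fundamental weights
  lambda_1..lambda_n, as functions nat => int (or nat => nat for dominant
  weights) supported on {1..n}.\<close>

definition cartanA :: "nat \<Rightarrow> nat \<Rightarrow> nat \<Rightarrow> int" where
  "cartanA n i j =
     (if i \<in> {1..n} \<and> j \<in> {1..n} then
        (if i = j then 2 else if i = j + 1 \<or> j = i + 1 then -1 else 0)
      else 0)"

text \<open>The simple root alpha_j expressed in fundamental weights:
  its lambda_i coefficient is the Cartan integer.\<close>
definition simple_root :: "nat \<Rightarrow> nat \<Rightarrow> (nat \<Rightarrow> int)" where
  "simple_root n j = (\<lambda>i. cartanA n i j)"

definition root_lattice :: "nat \<Rightarrow> (nat \<Rightarrow> int) set" where
  "root_lattice n = {\<mu>. \<exists>c :: nat \<Rightarrow> int. \<mu> = (\<lambda>i. \<Sum>j = 1..n. c j * simple_root n j i)}"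

definition dominant_weights :: "nat \<Rightarrow> (nat \<Rightarrow> nat) set" where
  "dominant_weights n = {w. \<forall>i. i \<notin> {1..n} \<longrightarrow> w i = 0}"

definition Psi :: "nat \<Rightarrow> (nat \<Rightarrow> nat) set" where
  "Psi n = {w \<in> dominant_weights n. (\<lambda>i. 2 * int (w i)) \<in> root_lattice n}"

definition Psi_min :: "nat \<Rightarrow> (nat \<Rightarrow> nat) set" where
  "Psi_min n = {w \<in> Psi n - {(\<lambda>_. 0)}.
      \<not> (\<exists>\<mu>1 \<in> Psi n - {(\<lambda>_. 0)}. \<exists>\<mu>2 \<in> Psi n - {(\<lambda>_. 0)}. w = (\<lambda>i. \<mu>1 i + \<mu>2 i))}"

definition nseqs :: "nat \<Rightarrow> (nat \<Rightarrow> nat) set" where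
  "nseqs n = {t. \<forall>i. i \<notin> {1..n} \<longrightarrow> t i = 0}"

definition seq_weight :: "nat \<Rightarrow> (nat \<Rightarrow> nat) \<Rightarrow> nat" where
  "seq_weight n t = (\<Sum>i = 1..n. i * t i)"

definition of_type :: "nat \<Rightarrow> nat \<Rightarrow> (nat \<Rightarrow> nat) \<Rightarrow> bool" where
  "of_type n k t \<longleftrightarrow> t \<in> nseqs n \<and> k dvd seq_weight n t"

definition minimal_seqs :: "nat \<Rightarrow> nat \<Rightarrow> (nat \<Rightarrow> nat) set" where
  "minimal_seqs n k = {t. of_type n k t \<and> t \<noteq> (\<lambda>_. 0) \<and>
      \<not> (\<exists>s u. of_type n k s \<and> of_type n k u \<and> s \<noteq> (\<lambda>_. 0) \<and> u \<noteq> (\<lambda>_. 0)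
              \<and> t = (\<lambda>i. s i + u i))}"

end

theory Submission
  imports Defs
begin

text \<open>The root lattice of \<open>A\<^sub>n\<close> has index \<open>n + 1\<close> in the weight lattice, and membership is
  detected by the functional \<open>\<Sum> i \<cdot> \<mu>\<^sub>i\<close> modulo \<open>n + 1\<close>: it sends \<open>\<alpha>\<^sub>j\<close> to \<open>0\<close> for \<open>j < n\<close> and
  \<open>\<alpha>\<^sub>n\<close> to \<open>n + 1\<close>, and conversely the Cartan system can be solved by discrete summation.
  Hence \<open>2\<lambda> \<in> Q\<close> iff \<open>n + 1\<close> divides \<open>2|t|\<close>, i.e. iff \<open>r\<close> divides \<open>|t|\<close>, where \<open>t\<close> is the
  coordinate sequence of \<open>\<lambda>\<close>. So \<open>\<Psi>\<close> is literally the set of \<open>n\<close>-sequences of type \<open>r\<close>,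
  and \<open>\<Psi>\<^sub>m\<^sub>i\<^sub>n\<close> is the set of minimal ones.\<close>

lemma cartanA_sym: "cartanA n i j = cartanA n j i"
  unfolding cartanA_def by auto

lemma sum_cartanA_row:
  fixes f :: "nat \<Rightarrow> int"
  assumes i: "i \<in> {1..n}"
  shows "(\<Sum>j=1..n. f j * cartanA n i j) =
     2 * f i - (if 1 < i then f (i - 1) else 0) - (if i < n then f (i + 1) else 0)"
proof -
  have "(\<Sum>j=1..n. f j * cartanA n i j) = (\<Sum>j=1..n.
      (if j = i then 2 * f j else 0) - (if j = i - 1 then (if 1 < i then f j else 0) else 0)
      - (if j = i + 1 then f j else 0))"
    using i by (intro sum.cong) (auto simp: cartanA_def)
  also have "\<dots> = 2 * f i - (if 1 < i then f (i - 1) else 0) - (if i < n then f (i + 1) else 0)"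
    using i by (simp add: sum_subtractf) auto
  finally show ?thesis .
qed

lemma weighted_sum_root_lattice_combination:
  fixes c :: "nat \<Rightarrow> int"
  assumes "n \<ge> 1"
  shows "(\<Sum>i=1..n. int i * (\<Sum>j=1..n. c j * simple_root n j i)) = int (n + 1) * c n"
proof -
  have col: "(\<Sum>i=1..n. int i * cartanA n j i) = (if j = n then int (n + 1) else 0)"
    if j: "j \<in> {1..n}" for j
    using sum_cartanA_row[OF j, of int] j by auto
  have "(\<Sum>i=1..n. int i * (\<Sum>j=1..n. c j * simple_root n j i))
      = (\<Sum>i=1..n. \<Sum>j=1..n. c j * (int i * cartanA n j i))"
    by (simp add: simple_root_def sum_distrib_left cartanA_sym mult.commute mult.left_commute)
  also have "\<dots> = (\<Sum>j=1..n. c j * (\<Sum>i=1..n. int i * cartanA n j i))"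
    by (subst sum.swap) (simp add: sum_distrib_left)
  also have "\<dots> = (\<Sum>j=1..n. if j = n then c j * int (n + 1) else 0)"
    using col by (intro sum.cong) auto
  also have "\<dots> = int (n + 1) * c n"
    using assms by simp
  finally show ?thesis .
qed

lemma in_root_latticeI:
  fixes \<mu> c :: "nat \<Rightarrow> int"
  assumes supp: "\<And>i. i \<notin> {1..n} \<Longrightarrow> \<mu> i = 0"
    and c0: "c 0 = 0" and cn: "c (Suc n) = 0"
    and rec: "\<And>j. 2 * c (Suc j) - c j - c (Suc (Suc j)) = \<mu> (Suc j)"
  shows "\<mu> \<in> root_lattice n"
proof -
  have "\<mu> i = (\<Sum>j = 1..n. c j * simple_root n j i)" for i
  proof (cases "i \<in> {1..n}")
    case False
    then have "\<And>j. cartanA n i j = 0" by (auto simp: cartanA_def)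
    then show ?thesis using supp False by (simp add: simple_root_def)
  next
    case True
    have "(\<Sum>j = 1..n. c j * simple_root n j i) = 2 * c i - c (i - 1) - c (i + 1)"
      using sum_cartanA_row[OF True, of c] True c0 cn by (auto simp: simple_root_def)
    also have "\<dots> = \<mu> i"
      using True rec[of "i - 1"] by (cases i) auto
    finally show ?thesis by simp
  qed
  then show ?thesis
    unfolding root_lattice_def by blast
qed

text \<open>The solution is \<open>c\<^sub>k = k t - \<Sum>\<^sub>m\<^sub><\<^sub>k (k - m) \<mu>\<^sub>m\<close>; the slope \<open>t\<close> can be chosen integral
  making \<open>c\<^sub>n\<^sub>+\<^sub>1 = 0\<close> precisely because \<open>n + 1\<close> divides \<open>\<Sum> m \<mu>\<^sub>m\<close>.\<close>
lemma discrete_poisson_solvable: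
  fixes \<mu> :: "nat \<Rightarrow> int"
  assumes m0: "\<mu> 0 = 0"
    and q: "(\<Sum>i=1..n. int i * \<mu> i) = int (n + 1) * q"
  obtains c :: "nat \<Rightarrow> int" where "c 0 = 0" "c (Suc n) = 0"
    "\<And>j. 2 * c (Suc j) - c j - c (Suc (Suc j)) = \<mu> (Suc j)"
proof
  define P where "P k = (\<Sum>m<Suc k. \<mu> m)" for k
  define D where "D k = (\<Sum>m<k. (int k - int m) * \<mu> m)" for k
  define c where "c k = int k * (P n - q) - D k" for k
  have D_Suc: "D (Suc k) = D k + P k" for k
  proof -
    have "D (Suc k) = (\<Sum>m<k. (int k - int m) * \<mu> m + \<mu> m) + \<mu> k"
      unfolding D_def by (simp add: algebra_simps)
    also have "\<dots> = D k + P k"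
      unfolding D_def P_def by (simp add: sum.distrib)
    finally show ?thesis .
  qed
  show "c 0 = 0"
    by (simp add: c_def D_def)
  have "{..<Suc n} = insert 0 {1..n}" by auto
  then have "(\<Sum>i<Suc n. int i * \<mu> i) = int (n + 1) * q"
    using q by simp
  then have "D (Suc n) = int (Suc n) * P n - int (n + 1) * q"
    unfolding D_def P_def by (simp add: algebra_simps sum_subtractf sum_distrib_left)
  then show "c (Suc n) = 0"
    by (simp add: c_def algebra_simps)
  show "2 * c (Suc j) - c j - c (Suc (Suc j)) = \<mu> (Suc j)" for j
    using D_Suc[of j] D_Suc[of "Suc j"] by (simp add: c_def P_def algebra_simps)
qed

lemma root_lattice_iff_dvd:
  fixes \<mu> :: "nat \<Rightarrow> int"
  assumes n: "n \<ge> 1" and supp: "\<And>i. i \<notin> {1..n} \<Longrightarrow> \<mu> i = 0"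
  shows "\<mu> \<in> root_lattice n \<longleftrightarrow> int (n + 1) dvd (\<Sum>i=1..n. int i * \<mu> i)"
proof
  assume "\<mu> \<in> root_lattice n"
  then obtain c where "\<mu> = (\<lambda>i. \<Sum>j = 1..n. c j * simple_root n j i)"
    unfolding root_lattice_def by blast
  then show "int (n + 1) dvd (\<Sum>i=1..n. int i * \<mu> i)"
    using weighted_sum_root_lattice_combination[OF n] by simp
next
  assume "int (n + 1) dvd (\<Sum>i=1..n. int i * \<mu> i)"
  then obtain q where "(\<Sum>i=1..n. int i * \<mu> i) = int (n + 1) * q" by blast
  moreover have "\<mu> 0 = 0" using supp by simp
  ultimately obtain c where "c 0 = 0" "c (Suc n) = 0"
    "\<And>j. 2 * c (Suc j) - c j - c (Suc (Suc j)) = \<mu> (Suc j)"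
    using discrete_poisson_solvable by metis
  then show "\<mu> \<in> root_lattice n"
    using in_root_latticeI supp by blast
qed

lemma div_gcd_two_dvd_iff:
  fixes m x :: nat
  shows "m div gcd m 2 dvd x \<longleftrightarrow> m dvd 2 * x"
proof (cases "even m")
  case True
  then obtain k where "m = 2 * k" by blast
  moreover have "gcd m 2 = 2" using True by (simp add: gcd_nat.absorb2)
  ultimately show ?thesis by simp
next
  case False
  then have "coprime m 2" by simp
  then show ?thesis by (simp add: coprime_dvd_mult_right_iff)
qed

lemma double_in_root_lattice_iff:
  assumes "n \<ge> 1" "w \<in> nseqs n"
  shows "(\<lambda>i. 2 * int (w i)) \<in> root_lattice n \<longleftrightarrow> (n + 1) dvd 2 * seq_weight n w"
proof -
  have "(\<Sum>i=1..n. int i * (2 * int (w i))) = int (2 * seq_weight n w)"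
    by (simp add: seq_weight_def sum_distrib_left algebra_simps)
  then show ?thesis
    using root_lattice_iff_dvd[OF assms(1), of "\<lambda>i. 2 * int (w i)"] assms(2)
    by (simp only: of_nat_dvd_iff) (simp add: nseqs_def)
qed

lemma Psi_eq_of_type:
  assumes "n \<ge> 1"
  shows "Psi n = {t. of_type n ((n + 1) div gcd (n + 1) 2) t}"
  using double_in_root_lattice_iff[OF assms]
  by (auto simp: Psi_def of_type_def div_gcd_two_dvd_iff dominant_weights_def nseqs_def)

theorem theorem4p4:
  fixes n r :: nat
  assumes "n \<ge> 2"
    and "r = (n + 1) div gcd (n + 1) 2"
  shows "card (Psi_min n) = card (minimal_seqs n r)"
proof -
  have "Psi n = {t. of_type n r t}"
    using Psi_eq_of_type[of n] assms by simp
  then have "Psi_min n = minimal_seqs n r"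
    unfolding Psi_min_def minimal_seqs_def by blast
  then show ?thesis by simp
qed

end
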